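(* Let $\mathcal X\subseteq[0,1]$ be a Borel set with $0,1\in\mathcal X$, fix $\mu\in(0,1)$ and let $I_\mu=[(\mu-1)^{-1},\mu^{-1}]$. For $\lambda\in I_\mu$ let $E_\lambda(x)=1+\lambda(x-\mu)$ and for $\alpha\in\mathbb R$ let $E^{\mathrm H}_\alpha(x)=e^{\alpha(x-\mu)-\alpha^2/8}$, for $x\in\mathcal X$. Then for each $\alpha\in\mathbb R$ there is $\lambda_\alpha\in I_\mu$ such that $E_{\lambda_\alpha}(x)\ge E^{\mathrm H}_\alpha(x)$ for all $x\in\mathcal X$. On the other hand, for any non-zero $\lambda\in I_\mu$ and every $\alpha\in\mathbb R$, there is at least one point $x_\alpha\in\mathcal X$ such that $E^{\mathrm H}_\alpha(x_\alpha)<E_\lambda(x_\alpha)$. *)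

theory Defs
  imports "HOL-Analysis.Analysis"
begin

definition I_mu :: "real \<Rightarrow> real set" where
  "I_mu mu = {inverse (mu - 1) .. inverse mu}"

definition E_lin :: "real \<Rightarrow> real \<Rightarrow> real \<Rightarrow> real" where
  "E_lin mu lam x = 1 + lam * (x - mu)"

definition E_hoeff :: "real \<Rightarrow> real \<Rightarrow> real \<Rightarrow> real" where
  "E_hoeff mu alpha x = exp (alpha * (x - mu) - alpha\<^sup>2 / 8)"

end

theory Submission
  imports Defs
begin

text \<open>
  On \<open>[0, 1]\<close> the linear e-value is affine and the Hoeffding e-value is convex, so both are
  controlled by their values at the endpoints 0 and 1. Averaging over these endpoints with the
  Bernoulli(\<open>mu\<close>) weights \<open>1 - mu\<close> and \<open>mu\<close> gives exactly 1 for every \<open>E_lin\<close>, and at most 1 for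
  \<open>E_hoeff\<close> by Hoeffding's lemma for a Bernoulli variable, strictly less if \<open>alpha \<noteq> 0\<close>.
  So the chord of \<open>E_hoeff\<close> is dominated by a suitable \<open>E_lin\<close>, whereas no \<open>E_lin\<close> with
  \<open>lam \<noteq> 0\<close> can lie below \<open>E_hoeff\<close> at both endpoints. Strictness in Hoeffding's lemma holds
  because \<open>t\<^sup>2/8\<close> minus the cumulant generating function of the centered Bernoulli variable
  has second derivative \<open>(u - 1/2)\<^sup>2\<close>, where \<open>u\<close> is the success probability of the
  exponentially tilted Bernoulli law; as \<open>u\<close> is strictly increasing in \<open>t\<close>, this vanishes at
  most once.
\<close>

lemma strict_mono_if_deriv_nonneg_single_zero:
  fixes f f' :: "real \<Rightarrow> real"
  assumes deriv: "\<And>x. (f has_real_derivative f' x) (at x)"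
    and nonneg: "\<And>x. 0 \<le> f' x"
    and single_zero: "\<And>x y. f' x = 0 \<Longrightarrow> f' y = 0 \<Longrightarrow> x = y"
  shows "strict_mono f"
proof (rule strict_monoI)
  fix x y :: real
  assume "x < y"
  define m where "m = (x + y) / 2"
  have "x < m" "m < y" using \<open>x < y\<close> by (auto simp: m_def)
  obtain z1 where z1: "z1 < m" "f m - f x = (m - x) * f' z1"
    using MVT2[OF \<open>x < m\<close> deriv] by blast
  obtain z2 where z2: "m < z2" "f y - f m = (y - m) * f' z2"
    using MVT2[OF \<open>m < y\<close> deriv] by blast
  have "f' z1 > 0 \<or> f' z2 > 0"
    using single_zero[of z1 z2] nonneg[of z1] nonneg[of z2] z1(1) z2(1) by fastforce
  moreover have "0 \<le> (m - x) * f' z1" "0 \<le> (y - m) * f' z2"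
    using \<open>x < m\<close> \<open>m < y\<close> nonneg by simp_all
  ultimately show "f x < f y"
    using z1(2) z2(2) \<open>x < m\<close> \<open>m < y\<close> by (smt (verit) mult_pos_pos)
qed

lemma strict_min_at_critical_point_if_deriv_strict_mono:
  fixes f f' :: "real \<Rightarrow> real"
  assumes deriv: "\<And>x. (f has_real_derivative f' x) (at x)"
    and "strict_mono f'" and "f' c = 0" and "x \<noteq> c"
  shows "f c < f x"
proof (cases "c < x")
  case True
  obtain z where "c < z" "f x - f c = (x - c) * f' z"
    using MVT2[OF True deriv] by blast
  moreover have "f' z > 0"
    using \<open>strict_mono f'\<close> \<open>c < z\<close> \<open>f' c = 0\<close> by (metis strict_monoD)
  ultimately show ?thesis using True by (smt (verit) mult_pos_pos)
next
  case False
  then have "x < c" using \<open>x \<noteq> c\<close> by simp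
  obtain z where "z < c" "f c - f x = (c - x) * f' z"
    using MVT2[OF \<open>x < c\<close> deriv] by blast
  moreover have "f' z < 0"
    using \<open>strict_mono f'\<close> \<open>z < c\<close> \<open>f' c = 0\<close> by (metis strict_monoD)
  ultimately show ?thesis using \<open>x < c\<close> by (smt (verit) mult_pos_neg)
qed

definition centered_bernoulli_cgf :: "real \<Rightarrow> real \<Rightarrow> real" where
  "centered_bernoulli_cgf p t = ln (1 - p + p * exp t) - p * t"

definition tilted_bernoulli_prob :: "real \<Rightarrow> real \<Rightarrow> real" where
  "tilted_bernoulli_prob p t = p * exp t / (1 - p + p * exp t)"

lemma bernoulli_mgf_pos:
  fixes p t :: real
  assumes "0 \<le> p" "p \<le> 1"
  shows "0 < 1 - p + p * exp t"
proof (cases "p = 0")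
  case False
  then show ?thesis using assms by (intro add_nonneg_pos) auto
qed simp

context
  fixes p :: real
  assumes p: "0 < p" "p < 1"
begin

lemma tilted_bernoulli_prob_bounds:
  "0 < tilted_bernoulli_prob p t" "tilted_bernoulli_prob p t < 1"
  using bernoulli_mgf_pos[of p t] p by (simp_all add: tilted_bernoulli_prob_def divide_simps)

lemma has_real_derivative_centered_bernoulli_cgf:
  "(centered_bernoulli_cgf p has_real_derivative tilted_bernoulli_prob p t - p) (at t)"
  using bernoulli_mgf_pos[of p t] p
  unfolding centered_bernoulli_cgf_def[abs_def] tilted_bernoulli_prob_def
  by (auto intro!: derivative_eq_intros)

lemma has_real_derivative_tilted_bernoulli_prob:
  "(tilted_bernoulli_prob p has_real_derivative
      tilted_bernoulli_prob p t * (1 - tilted_bernoulli_prob p t)) (at t)"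
  using bernoulli_mgf_pos[of p t] p unfolding tilted_bernoulli_prob_def[abs_def]
  by (auto intro!: derivative_eq_intros simp: field_simps power2_eq_square)

lemma strict_mono_tilted_bernoulli_prob: "strict_mono (tilted_bernoulli_prob p)"
proof (rule strict_monoI)
  fix x y :: real
  assume "x < y"
  then show "tilted_bernoulli_prob p x < tilted_bernoulli_prob p y"
  proof (rule DERIV_pos_imp_increasing)
    fix t
    have "0 < tilted_bernoulli_prob p t * (1 - tilted_bernoulli_prob p t)"
      using tilted_bernoulli_prob_bounds[of t] by simp
    then show "\<exists>d. (tilted_bernoulli_prob p has_real_derivative d) (at t) \<and> 0 < d"
      using has_real_derivative_tilted_bernoulli_prob by blast
  qed
qed

lemma centered_bernoulli_cgf_less_Hoeffding:
  assumes "h \<noteq> 0"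
  shows "centered_bernoulli_cgf p h < h\<^sup>2 / 8"
proof -
  define u where "u = tilted_bernoulli_prob p"
  define g where "g t = t\<^sup>2 / 8 - centered_bernoulli_cgf p t" for t
  define g' where "g' t = t / 4 - (u t - p)" for t
  have "(g has_real_derivative g' t) (at t)" for t
    unfolding g_def g'_def u_def
    by (auto intro!: derivative_eq_intros has_real_derivative_centered_bernoulli_cgf)
  moreover have "strict_mono g'"
  proof (rule strict_mono_if_deriv_nonneg_single_zero)
    show "(g' has_real_derivative (u t - 1/2)\<^sup>2) (at t)" for t
      using has_real_derivative_tilted_bernoulli_prob[of t] unfolding g'_def u_def
      by (auto intro!: derivative_eq_intros simp: power2_eq_square algebra_simps)
    show "(u x - 1/2)\<^sup>2 = 0 \<Longrightarrow> (u y - 1/2)\<^sup>2 = 0 \<Longrightarrow> x = y" for x y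
      using strict_mono_eq[OF strict_mono_tilted_bernoulli_prob, of x y] by (simp add: u_def)
  qed simp
  moreover have "g' 0 = 0" "g 0 = 0"
    by (simp_all add: g_def g'_def u_def centered_bernoulli_cgf_def tilted_bernoulli_prob_def)
  ultimately have "0 < g h"
    using strict_min_at_critical_point_if_deriv_strict_mono[of g g' 0 h] assms by simp
  then show ?thesis by (simp add: g_def)
qed

lemma centered_bernoulli_cgf_le_Hoeffding: "centered_bernoulli_cgf p h \<le> h\<^sup>2 / 8"
  using centered_bernoulli_cgf_less_Hoeffding[of h]
  by (cases "h = 0") (simp_all add: centered_bernoulli_cgf_def)

end

lemma E_lin_affine: "E_lin mu lam x = (1 - x) * E_lin mu lam 0 + x * E_lin mu lam 1"
  by (simp add: E_lin_def algebra_simps)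

lemma E_lin_bernoulli_mean: "(1 - mu) * E_lin mu lam 0 + mu * E_lin mu lam 1 = 1"
  by (simp add: E_lin_def algebra_simps)

lemma E_hoeff_le_chord:
  assumes "0 \<le> x" "x \<le> 1"
  shows "E_hoeff mu alpha x \<le> (1 - x) * E_hoeff mu alpha 0 + x * E_hoeff mu alpha 1"
proof -
  have "alpha * (x - mu) - alpha\<^sup>2 / 8
      = (1 - x) *\<^sub>R (alpha * (0 - mu) - alpha\<^sup>2 / 8) + x *\<^sub>R (alpha * (1 - mu) - alpha\<^sup>2 / 8)"
    by (simp add: field_simps)
  then show ?thesis
    unfolding E_hoeff_def using convex_onD[OF exp_convex] assms by simp
qed

lemma E_hoeff_bernoulli_mean:
  assumes "0 \<le> mu" "mu \<le> 1"
  shows "(1 - mu) * E_hoeff mu alpha 0 + mu * E_hoeff mu alpha 1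
    = exp (centered_bernoulli_cgf mu alpha - alpha\<^sup>2 / 8)"
proof -
  have "(1 - mu) * E_hoeff mu alpha 0 + mu * E_hoeff mu alpha 1
      = (1 - mu + mu * exp alpha) * exp (- mu * alpha - alpha\<^sup>2 / 8)"
    by (simp add: E_hoeff_def algebra_simps flip: exp_add)
  also have "\<dots> = exp (ln (1 - mu + mu * exp alpha) + (- mu * alpha - alpha\<^sup>2 / 8))"
    using bernoulli_mgf_pos[OF assms, of alpha] by (simp add: exp_add)
  also have "\<dots> = exp (centered_bernoulli_cgf mu alpha - alpha\<^sup>2 / 8)"
    by (simp add: centered_bernoulli_cgf_def algebra_simps)
  finally show ?thesis .
qed

lemma E_hoeff_bernoulli_mean_le:
  assumes "0 < mu" "mu < 1"
  shows "(1 - mu) * E_hoeff mu alpha 0 + mu * E_hoeff mu alpha 1 \<le> 1"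
  using centered_bernoulli_cgf_le_Hoeffding[OF assms, of alpha] assms
  by (simp add: E_hoeff_bernoulli_mean)

lemma E_hoeff_bernoulli_mean_less:
  assumes "0 < mu" "mu < 1" "alpha \<noteq> 0"
  shows "(1 - mu) * E_hoeff mu alpha 0 + mu * E_hoeff mu alpha 1 < 1"
  using centered_bernoulli_cgf_less_Hoeffding[OF assms] assms
  by (simp add: E_hoeff_bernoulli_mean)

lemma I_mu_iff_E_lin_nonneg:
  assumes "0 < mu" "mu < 1"
  shows "lam \<in> I_mu mu \<longleftrightarrow> 0 \<le> E_lin mu lam 0 \<and> 0 \<le> E_lin mu lam 1"
proof -
  have "lam \<le> inverse mu \<longleftrightarrow> 0 \<le> 1 - lam * mu"
    using assms by (simp add: field_simps)
  moreover have "inverse (mu - 1) \<le> lam \<longleftrightarrow> 0 \<le> 1 + lam * (1 - mu)"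
    using assms by (simp add: field_simps)
  ultimately show ?thesis
    by (auto simp: I_mu_def E_lin_def algebra_simps)
qed

lemma ex_E_lin_ge_E_hoeff:
  assumes "0 < mu" "mu < 1"
  shows "\<exists>lam\<in>I_mu mu. \<forall>x\<in>{0..1}. E_hoeff mu alpha x \<le> E_lin mu lam x"
proof
  define lam where "lam = (1 - E_hoeff mu alpha 0) / mu"
  have at0: "E_lin mu lam 0 = E_hoeff mu alpha 0"
    using assms by (simp add: lam_def E_lin_def)
  have at1: "E_hoeff mu alpha 1 \<le> E_lin mu lam 1"
  proof -
    have "mu * E_hoeff mu alpha 1 \<le> mu * E_lin mu lam 1"
      using E_hoeff_bernoulli_mean_le[OF assms, of alpha] E_lin_bernoulli_mean[of mu lam] at0
      by simp
    then show ?thesis using assms by simp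
  qed
  have "0 < E_hoeff mu alpha x" for x by (simp add: E_hoeff_def)
  then show "lam \<in> I_mu mu"
    using at0 at1 I_mu_iff_E_lin_nonneg[OF assms] by (metis less_imp_le order_trans)
  show "\<forall>x\<in>{0..1}. E_hoeff mu alpha x \<le> E_lin mu lam x"
  proof
    fix x :: real
    assume "x \<in> {0..1}"
    then have "E_hoeff mu alpha x \<le> (1 - x) * E_hoeff mu alpha 0 + x * E_hoeff mu alpha 1"
      by (simp add: E_hoeff_le_chord)
    also have "\<dots> \<le> (1 - x) * E_lin mu lam 0 + x * E_lin mu lam 1"
      using \<open>x \<in> {0..1}\<close> at0 at1 by (simp add: mult_left_mono)
    finally show "E_hoeff mu alpha x \<le> E_lin mu lam x"
      by (simp flip: E_lin_affine)
  qed
qed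

lemma E_hoeff_less_E_lin_at_endpoint:
  assumes "0 < mu" "mu < 1" "lam \<noteq> 0"
  shows "E_hoeff mu alpha 0 < E_lin mu lam 0 \<or> E_hoeff mu alpha 1 < E_lin mu lam 1"
proof (rule ccontr)
  assume "\<not> ?thesis"
  then have le0: "E_lin mu lam 0 \<le> E_hoeff mu alpha 0"
    and le1: "E_lin mu lam 1 \<le> E_hoeff mu alpha 1"
    by auto
  show False
  proof (cases "alpha = 0")
    case True
    then have "1 - lam * mu \<le> 1" "1 + lam * (1 - mu) \<le> 1"
      using le0 le1 by (simp_all add: E_lin_def E_hoeff_def)
    then show False
      using assms by (smt (verit) mult_pos_pos mult_neg_pos)
  next
    case False
    have "1 \<le> (1 - mu) * E_hoeff mu alpha 0 + mu * E_hoeff mu alpha 1"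
      using le0 le1 assms E_lin_bernoulli_mean[of mu lam]
      by (smt (verit) mult_left_mono)
    then show False
      using E_hoeff_bernoulli_mean_less[OF assms(1,2) False] by simp
  qed
qed

theorem proposition2:
  fixes X :: "real set" and mu :: real
  assumes "X \<in> sets borel"
    and "X \<subseteq> {0..1}"
    and "0 \<in> X" and "1 \<in> X"
    and "0 < mu" and "mu < 1"
  shows "(\<forall>alpha::real. \<exists>lam\<in>I_mu mu. \<forall>x\<in>X. E_lin mu lam x \<ge> E_hoeff mu alpha x)
       \<and> (\<forall>lam\<in>I_mu mu. lam \<noteq> 0 \<longrightarrow>
            (\<forall>alpha::real. \<exists>x\<in>X. E_hoeff mu alpha x < E_lin mu lam x))"
proof (intro conjI allI ballI impI)
  fix alpha :: real
  show "\<exists>lam\<in>I_mu mu. \<forall>x\<in>X. E_lin mu lam x \<ge> E_hoeff mu alpha x"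
    using ex_E_lin_ge_E_hoeff[OF \<open>0 < mu\<close> \<open>mu < 1\<close>, of alpha] \<open>X \<subseteq> {0..1}\<close>
    by blast
next
  fix lam alpha :: real
  assume "lam \<noteq> 0"
  then show "\<exists>x\<in>X. E_hoeff mu alpha x < E_lin mu lam x"
    using E_hoeff_less_E_lin_at_endpoint[OF \<open>0 < mu\<close> \<open>mu < 1\<close>] \<open>0 \<in> X\<close> \<open>1 \<in> X\<close>
    by blast
qed

end
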